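(* For any integers $1\le L\le K\le n$ and any $\epsilon\in(0,1]$, there is an $\epsilon$-net $\mathscr Y(\epsilon,n,K,L)$ of $\mathcal N(n,K,L)$ in Frobenius norm whose cardinality satisfies $$\ln|\mathscr Y(\epsilon,n,K,L)|\le n\ln K+K\ln L+(K^2+2nL)\ln\Big(\frac{9nL}{\epsilon}\Big).$$
   Context: Nested Block Model class: for integers $1\le L\le K\le n$, $\mathcal N(n,K,L)$ is the set of matrices $P\in[0,1]^{n\times n}$ for which there exist a clustering function $z:\{1,\dots,n\}\to\{1,\dots,K\}$ (communities), a clustering function $c:\{1,\dots,K\}\to\{1,\dots,L\}$ (meta-communities), a matrix $B\in[0,1]^{K\times K}$ and a matrix $H\in\mathbb R_+^{n\times L}$ such that, with $n_k=\#\{i:z(i)=k\}$, $$\sum_{i:\,z(i)=k}H_{i,l}=n_k\quad\text{for all }k\le K,\ l\le L,$$ and $$P_{ij}=B_{z(i),z(j)}\,H_{i,c(z(j))}\,H_{j,c(z(i))}\quad\text{for all }i,j.$$ An $\epsilon$-net of a set $\mathcal S$ of matrices in Frobenius norm is a finite set $\mathcal Y$ such that for every $S\in\mathcal S$ there is $Y\in\mathcal Y$ with $\|S-Y\|_F\le\epsilon$. *)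

theory Defs
  imports "HOL-Analysis.Analysis"
begin

text \<open>n x n real matrices are represented as functions nat => nat => real,
  indexed by {0..<n}; entries outside the index range are irrelevant.
  Communities are {0..<K}, meta-communities are {0..<L}.\<close>

definition frob_dist :: "nat \<Rightarrow> (nat \<Rightarrow> nat \<Rightarrow> real) \<Rightarrow> (nat \<Rightarrow> nat \<Rightarrow> real) \<Rightarrow> real" where
  "frob_dist n S Y = sqrt (\<Sum>i<n. \<Sum>j<n. (S i j - Y i j)^2)"

definition nested_block_model :: "nat \<Rightarrow> nat \<Rightarrow> nat \<Rightarrow> (nat \<Rightarrow> nat \<Rightarrow> real) set" where
  "nested_block_model n K L = {P.
     (\<forall>i<n. \<forall>j<n. 0 \<le> P i j \<and> P i j \<le> 1) \<and>
     (\<exists>(z::nat\<Rightarrow>nat) (c::nat\<Rightarrow>nat) (B::nat\<Rightarrow>nat\<Rightarrow>real) (H::nat\<Rightarrow>nat\<Rightarrow>real).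
        (\<forall>i<n. z i < K) \<and> (\<forall>k<K. c k < L) \<and>
        (\<forall>k<K. \<forall>k'<K. 0 \<le> B k k' \<and> B k k' \<le> 1) \<and>
        (\<forall>i<n. \<forall>l<L. 0 \<le> H i l) \<and>
        (\<forall>k<K. \<forall>l<L. (\<Sum>i\<in>{i. i < n \<and> z i = k}. H i l) = real (card {i. i < n \<and> z i = k})) \<and>
        (\<forall>i<n. \<forall>j<n. P i j = B (z i) (z j) * H i (c (z j)) * H j (c (z i))))}"

definition is_eps_net :: "nat \<Rightarrow> real \<Rightarrow> (nat \<Rightarrow> nat \<Rightarrow> real) set \<Rightarrow> (nat \<Rightarrow> nat \<Rightarrow> real) set \<Rightarrow> bool" where
  "is_eps_net n \<epsilon> S Y \<longleftrightarrow> finite Y \<and> (\<forall>P\<in>S. \<exists>Q\<in>Y. frob_dist n P Q \<le> \<epsilon>)"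

end

theory Submission
  imports Defs
begin

text \<open>Dividing each \<open>H i l\<close> by its maximum over the community of \<open>i\<close>, and moving these maxima
  into \<open>B\<close>, rewrites every matrix of the model as \<open>P i j = s(z i, z j) x(i, c(z j)) x(j, c(z i))\<close>
  with all \<open>s\<close> and \<open>x\<close> in [0,1]: the new \<open>s(k,k')\<close> is an entry of \<open>P\<close> at a pair of maximisers.
  Rounding \<open>s\<close> and \<open>x\<close> down to the grid of mesh \<open>\<delta> = \<epsilon>/(3n)\<close> moves each entry by at most
  \<open>3\<delta>\<close> and hence \<open>P\<close> by at most \<open>\<epsilon>\<close> in Frobenius norm. The rounded parameters range over
  \<open>K\<^sup>n L\<^sup>K g\<^bsup>K\<^sup>2 + nL\<^esup>\<close> choices, with \<open>g \<le> 3n/\<epsilon> + 1 \<le> 9nL/\<epsilon>\<close> grid points.\<close>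

lemma abs_mult3_diff_le:
  fixes a b c a' b' c' d :: real
  assumes "0 \<le> b" "b \<le> 1" "0 \<le> c" "c \<le> 1" "0 \<le> a'" "a' \<le> 1" "0 \<le> b'" "b' \<le> 1"
    and "\<bar>a - a'\<bar> \<le> d" "\<bar>b - b'\<bar> \<le> d" "\<bar>c - c'\<bar> \<le> d"
  shows "\<bar>a * b * c - a' * b' * c'\<bar> \<le> 3 * d"
proof -
  have telescope: "a * b * c - a' * b' * c' = (a - a') * (b * c) + (b - b') * (a' * c) + (c - c') * (a' * b')"
    by (simp add: algebra_simps)
  have "\<bar>u * v\<bar> \<le> d" if "\<bar>u\<bar> \<le> d" "0 \<le> v" "v \<le> 1" for u v :: real
    using that mult_mono[of "\<bar>u\<bar>" d v 1] by (simp add: abs_mult)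
  then have "\<bar>(a - a') * (b * c)\<bar> \<le> d" "\<bar>(b - b') * (a' * c)\<bar> \<le> d" "\<bar>(c - c') * (a' * b')\<bar> \<le> d"
    using assms by (simp_all add: mult_le_one)
  then show ?thesis
    unfolding telescope by linarith
qed

lemma frob_dist_le_entrywise:
  assumes "\<And>i j. i < n \<Longrightarrow> j < n \<Longrightarrow> \<bar>S i j - Y i j\<bar> \<le> d"
  shows "frob_dist n S Y \<le> real n * d"
proof -
  have "0 \<le> d" if "0 < n"
    using assms[of 0 0] that by linarith
  have "(\<Sum>i<n. \<Sum>j<n. (S i j - Y i j)^2) \<le> (\<Sum>i<n. \<Sum>j<n. d^2)"
    using assms power_mono[of "\<bar>_\<bar>" d 2] by (intro sum_mono) (simp add: power2_abs)
  also have "\<dots> = (real n * d)^2"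
    by (simp add: power2_eq_square)
  finally have "frob_dist n S Y \<le> \<bar>real n * d\<bar>"
    unfolding frob_dist_def using real_sqrt_le_mono by fastforce
  also have "\<dots> = real n * d"
    using \<open>0 < n \<Longrightarrow> 0 \<le> d\<close> by (cases "n = 0") auto
  finally show ?thesis .
qed

definition grid :: "real \<Rightarrow> real set" where
  "grid \<delta> = (\<lambda>m. real m * \<delta>) ` {..nat \<lfloor>1 / \<delta>\<rfloor>}"

definition grid_round :: "real \<Rightarrow> real \<Rightarrow> real" where
  "grid_round \<delta> t = real (nat \<lfloor>t / \<delta>\<rfloor>) * \<delta>"

lemma finite_grid: "finite (grid \<delta>)"
  unfolding grid_def by simp

lemma card_grid_pos: "0 < card (grid \<delta>)"
proof -
  have "0 \<in> grid \<delta>"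
    unfolding grid_def by (rule image_eqI[of _ _ 0]) auto
  then show ?thesis
    using finite_grid card_gt_0_iff by blast
qed

lemma card_grid_le:
  assumes "0 < \<delta>"
  shows "real (card (grid \<delta>)) \<le> 1 / \<delta> + 1"
proof -
  have "card (grid \<delta>) \<le> nat \<lfloor>1 / \<delta>\<rfloor> + 1"
    unfolding grid_def using card_image_le[of "{..nat \<lfloor>1 / \<delta>\<rfloor>}"] by simp
  moreover have "real (nat \<lfloor>1 / \<delta>\<rfloor>) \<le> 1 / \<delta>"
    using assms by simp
  ultimately show ?thesis
    by linarith
qed

lemma grid_round_approx:
  assumes "0 < \<delta>" "0 \<le> t" "t \<le> 1"
  shows "grid_round \<delta> t \<in> grid \<delta>" "0 \<le> grid_round \<delta> t" "grid_round \<delta> t \<le> 1"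
    and "\<bar>t - grid_round \<delta> t\<bar> \<le> \<delta>"
proof -
  have round_eq: "grid_round \<delta> t = of_int \<lfloor>t / \<delta>\<rfloor> * \<delta>"
    unfolding grid_round_def using assms by simp
  have below: "of_int \<lfloor>t / \<delta>\<rfloor> * \<delta> \<le> t"
    using of_int_floor_le[of "t / \<delta>"] pos_le_divide_eq[OF assms(1)] by simp
  have above: "t < (of_int \<lfloor>t / \<delta>\<rfloor> + 1) * \<delta>"
    using real_of_int_floor_add_one_gt[of "t / \<delta>"] pos_divide_less_eq[OF assms(1)] by blast
  have "nat \<lfloor>t / \<delta>\<rfloor> \<le> nat \<lfloor>1 / \<delta>\<rfloor>"
    using assms by (intro nat_mono floor_mono divide_right_mono) auto
  then show "grid_round \<delta> t \<in> grid \<delta>"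
    unfolding grid_def grid_round_def by auto
  show "0 \<le> grid_round \<delta> t"
    unfolding grid_round_def using assms by simp
  show "grid_round \<delta> t \<le> 1" "\<bar>t - grid_round \<delta> t\<bar> \<le> \<delta>"
    using round_eq below above assms by (auto simp: algebra_simps)
qed

definition block_product ::
    "(nat \<Rightarrow> nat) \<Rightarrow> (nat \<Rightarrow> nat) \<Rightarrow> (nat \<times> nat \<Rightarrow> real) \<Rightarrow> (nat \<times> nat \<Rightarrow> real) \<Rightarrow> nat \<Rightarrow> nat \<Rightarrow> real" where
  "block_product z c s x = (\<lambda>i j. s (z i, z j) * x (i, c (z j)) * x (j, c (z i)))"

lemma nested_block_model_normal_form:
  assumes "P \<in> nested_block_model n K L"
  obtains z c s x where "\<forall>i<n. z i < K" "\<forall>k<K. c k < L"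
    and "\<forall>k<K. \<forall>k'<K. 0 \<le> s (k, k') \<and> s (k, k') \<le> 1"
    and "\<forall>i<n. \<forall>l<L. 0 \<le> x (i, l) \<and> x (i, l) \<le> 1"
    and "\<forall>i<n. \<forall>j<n. P i j = block_product z c s x i j"
proof -
  from assms obtain z c B H where
    P01: "\<forall>i<n. \<forall>j<n. 0 \<le> P i j \<and> P i j \<le> 1" and
    zK: "\<forall>i<n. z i < K" and cL: "\<forall>k<K. c k < L" and
    B01: "\<forall>k<K. \<forall>k'<K. 0 \<le> B k k' \<and> B k k' \<le> 1" and
    H0: "\<forall>i<n. \<forall>l<L. 0 \<le> H i l" and
    P_eq: "\<forall>i<n. \<forall>j<n. P i j = B (z i) (z j) * H i (c (z j)) * H j (c (z i))"
    unfolding nested_block_model_def by auto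
  define col_values where "col_values k l = insert 0 ((\<lambda>i. H i l) ` {i. i < n \<and> z i = k})" for k l
  define M where "M k l = Max (col_values k l)" for k l
  have fin: "finite (col_values k l)" for k l
    unfolding col_values_def by auto
  have M0: "0 \<le> M k l" for k l
    unfolding M_def col_values_def using fin by (intro Max_ge) (auto simp: col_values_def)
  have H_le_M: "H i l \<le> M (z i) l" if "i < n" for i l
    unfolding M_def using fin that by (intro Max_ge) (auto simp: col_values_def)
  have M_attained: "\<exists>i<n. z i = k \<and> H i l = M k l" if "M k l \<noteq> 0" for k l
  proof -
    have "M k l \<in> col_values k l"
      unfolding M_def using fin by (intro Max_in) (auto simp: col_values_def)
    with that show ?thesis
      by (auto simp: col_values_def)
  qed
  define x where "x p = (if M (z (fst p)) (snd p) = 0 then 0 else H (fst p) (snd p) / M (z (fst p)) (snd p))" for p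
  define s where "s p = B (fst p) (snd p) * M (fst p) (c (snd p)) * M (snd p) (c (fst p))" for p
  have s01: "0 \<le> s (k, k') \<and> s (k, k') \<le> 1" if "k < K" "k' < K" for k k'
  proof (cases "M k (c k') = 0 \<or> M k' (c k) = 0")
    case False
    then obtain i j where "i < n" "z i = k" "H i (c k') = M k (c k')"
      "j < n" "z j = k'" "H j (c k) = M k' (c k)"
      using M_attained by metis
    then have "P i j = s (k, k')"
      using P_eq unfolding s_def by auto
    then show ?thesis
      using P01 \<open>i < n\<close> \<open>j < n\<close> by metis
  qed (use B01 M0 that in \<open>auto simp: s_def\<close>)
  have x01: "0 \<le> x (i, l) \<and> x (i, l) \<le> 1" if "i < n" "l < L" for i l
    using H0 H_le_M[of i l] M0[of "z i" l] that unfolding x_def by (auto simp: divide_le_eq_1)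
  have P_block: "P i j = block_product z c s x i j" if "i < n" "j < n" for i j
  proof (cases "M (z i) (c (z j)) = 0 \<or> M (z j) (c (z i)) = 0")
    case True
    have "c (z j) < L" "c (z i) < L"
      using zK cL that by auto
    then have "H i (c (z j)) = 0 \<or> H j (c (z i)) = 0"
      using True H0 H_le_M that by (metis order_antisym)
    then show ?thesis
      using P_eq that True unfolding block_product_def x_def by auto
  next
    case False
    then show ?thesis
      using P_eq that unfolding block_product_def x_def s_def by (auto simp: field_simps)
  qed
  show ?thesis
    using s01 x01 P_block by (intro that[OF zK cL, of s x]) simp_all
qed

definition block_net :: "real \<Rightarrow> nat \<Rightarrow> nat \<Rightarrow> nat \<Rightarrow> (nat \<Rightarrow> nat \<Rightarrow> real) set" where
  "block_net \<delta> n K L = (\<lambda>(z, c, s, x). block_product z c s x) `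
     (({..<n} \<rightarrow>\<^sub>E {..<K}) \<times> ({..<K} \<rightarrow>\<^sub>E {..<L}) \<times>
      ({..<K} \<times> {..<K} \<rightarrow>\<^sub>E grid \<delta>) \<times> ({..<n} \<times> {..<L} \<rightarrow>\<^sub>E grid \<delta>))"

lemma finite_block_net: "finite (block_net \<delta> n K L)"
  unfolding block_net_def using finite_grid by (intro finite_imageI finite_cartesian_product finite_PiE) auto

lemma card_block_net_le:
  "card (block_net \<delta> n K L) \<le> K ^ n * L ^ K * card (grid \<delta>) ^ (K * K + n * L)"
proof -
  have "card (block_net \<delta> n K L) \<le> K ^ n * L ^ K * card (grid \<delta>) ^ (K * K) * card (grid \<delta>) ^ (n * L)"
    unfolding block_net_def
    by (rule card_image_le[THEN order_trans])
       (auto simp: card_cartesian_product card_PiE finite_grid intro!: finite_cartesian_product finite_PiE)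
  then show ?thesis
    by (simp add: power_add)
qed

lemma block_net_approximates:
  assumes "0 < \<delta>" "P \<in> nested_block_model n K L"
  obtains Q where "Q \<in> block_net \<delta> n K L" "\<And>i j. i < n \<Longrightarrow> j < n \<Longrightarrow> \<bar>P i j - Q i j\<bar> \<le> 3 * \<delta>"
proof -
  obtain z c s x where zK: "\<forall>i<n. z i < K" and cL: "\<forall>k<K. c k < L"
    and s01: "\<forall>k<K. \<forall>k'<K. 0 \<le> s (k, k') \<and> s (k, k') \<le> 1"
    and x01: "\<forall>i<n. \<forall>l<L. 0 \<le> x (i, l) \<and> x (i, l) \<le> 1"
    and P_eq: "\<forall>i<n. \<forall>j<n. P i j = block_product z c s x i j"
    using nested_block_model_normal_form[OF assms(2)] by blast
  define s' where "s' = restrict (grid_round \<delta> \<circ> s) ({..<K} \<times> {..<K})"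
  define x' where "x' = restrict (grid_round \<delta> \<circ> x) ({..<n} \<times> {..<L})"
  define Q where "Q = block_product (restrict z {..<n}) (restrict c {..<K}) s' x'"
  have "Q \<in> block_net \<delta> n K L"
    unfolding block_net_def Q_def s'_def x'_def
    using zK cL s01 x01 grid_round_approx(1)[OF \<open>0 < \<delta>\<close>]
    by (intro image_eqI[where x = "(restrict z {..<n}, restrict c {..<K}, s', x')"])
       (auto simp: restrict_PiE_iff s'_def x'_def)
  moreover have "\<bar>P i j - Q i j\<bar> \<le> 3 * \<delta>" if "i < n" "j < n" for i j
  proof -
    define a b c' where "a = s (z i, z j)" "b = x (i, c (z j))" "c' = x (j, c (z i))"
    have "z i < K" "z j < K" "c (z j) < L" "c (z i) < L"
      using zK cL that by auto
    then have factors01: "0 \<le> a" "a \<le> 1" "0 \<le> b" "b \<le> 1" "0 \<le> c'" "c' \<le> 1"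
      using s01 x01 that unfolding a_b_c'_def by auto
    have "P i j = a * b * c'"
      using P_eq that unfolding a_b_c'_def block_product_def by simp
    moreover have "Q i j = grid_round \<delta> a * grid_round \<delta> b * grid_round \<delta> c'"
      unfolding Q_def block_product_def s'_def x'_def a_b_c'_def
      using that \<open>z i < K\<close> \<open>z j < K\<close> \<open>c (z j) < L\<close> \<open>c (z i) < L\<close> by simp
    ultimately show ?thesis
      using grid_round_approx[OF \<open>0 < \<delta>\<close>] factors01 by (simp add: abs_mult3_diff_le)
  qed
  ultimately show ?thesis
    using that by blast
qed

lemma is_eps_net_block_net:
  assumes "0 < \<epsilon>" "0 < n"
  shows "is_eps_net n \<epsilon> (nested_block_model n K L) (block_net (\<epsilon> / (3 * real n)) n K L)"
  unfolding is_eps_net_def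
proof (intro conjI ballI finite_block_net)
  fix P assume "P \<in> nested_block_model n K L"
  moreover have "0 < \<epsilon> / (3 * real n)"
    using assms by simp
  ultimately obtain Q where "Q \<in> block_net (\<epsilon> / (3 * real n)) n K L"
    and "\<And>i j. i < n \<Longrightarrow> j < n \<Longrightarrow> \<bar>P i j - Q i j\<bar> \<le> 3 * (\<epsilon> / (3 * real n))"
    using block_net_approximates by blast
  moreover have "real n * (3 * (\<epsilon> / (3 * real n))) = \<epsilon>"
    using assms by simp
  ultimately show "\<exists>Q\<in>block_net (\<epsilon> / (3 * real n)) n K L. frob_dist n P Q \<le> \<epsilon>"
    using frob_dist_le_entrywise by metis
qed

lemma ln_card_le_ln:
  assumes "card A \<le> N" "0 < N"
  shows "ln (real (card A)) \<le> ln (real N)"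
  using assms by (cases "card A = 0") auto

lemma card_grid_le_scale:
  assumes "0 < \<epsilon>" "\<epsilon> \<le> 1" "1 \<le> n" "1 \<le> L"
  shows "real (card (grid (\<epsilon> / (3 * real n)))) \<le> 9 * real n * real L / \<epsilon>"
proof -
  have "1 \<le> real n / \<epsilon>"
    using assms by (simp add: le_divide_eq)
  have "real (card (grid (\<epsilon> / (3 * real n)))) \<le> 3 * (real n / \<epsilon>) + 1"
    using card_grid_le[of "\<epsilon> / (3 * real n)"] assms by simp
  also have "\<dots> \<le> 9 * (real n / \<epsilon>) * 1"
    using \<open>1 \<le> real n / \<epsilon>\<close> by simp
  also have "\<dots> \<le> 9 * (real n / \<epsilon>) * real L"
    using assms by (intro mult_left_mono) auto
  finally show ?thesis
    by simp
qed

lemma ln_card_block_net_le: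
  assumes "0 < K" "0 < L"
  shows "ln (real (card (block_net \<delta> n K L)))
    \<le> real n * ln (real K) + real K * ln (real L) + (real K ^ 2 + real n * real L) * ln (real (card (grid \<delta>)))"
proof -
  define g where "g = card (grid \<delta>)"
  have "0 < g"
    unfolding g_def by (rule card_grid_pos)
  then have "ln (real (card (block_net \<delta> n K L))) \<le> ln (real (K ^ n * L ^ K * g ^ (K * K + n * L)))"
    using assms unfolding g_def by (intro ln_card_le_ln card_block_net_le) simp
  also have "\<dots> = real n * ln (real K) + real K * ln (real L) + (real K ^ 2 + real n * real L) * ln (real g)"
    using assms \<open>0 < g\<close> by (simp add: ln_mult ln_realpow power2_eq_square)
  finally show ?thesis
    unfolding g_def .
qed

theorem lemma3:
  fixes n K L :: nat and \<epsilon> :: real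
  assumes "1 \<le> L" "L \<le> K" "K \<le> n" "0 < \<epsilon>" "\<epsilon> \<le> 1"
  shows "\<exists>Y. is_eps_net n \<epsilon> (nested_block_model n K L) Y \<and>
    ln (real (card Y)) \<le> real n * ln (real K) + real K * ln (real L)
      + (real K ^ 2 + 2 * real n * real L) * ln (9 * real n * real L / \<epsilon>)"
proof -
  define \<delta> where "\<delta> = \<epsilon> / (3 * real n)"
  define g where "g = real (card (grid \<delta>))"
  have "1 \<le> g"
    using card_grid_pos[of \<delta>] by (simp add: g_def)
  moreover have "g \<le> 9 * real n * real L / \<epsilon>"
    using card_grid_le_scale[of \<epsilon> n L] assms unfolding g_def \<delta>_def by simp
  ultimately have "(real K ^ 2 + real n * real L) * ln g
      \<le> (real K ^ 2 + 2 * real n * real L) * ln (9 * real n * real L / \<epsilon>)"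
    by (intro mult_mono) auto
  then have "ln (real (card (block_net \<delta> n K L))) \<le> real n * ln (real K) + real K * ln (real L)
      + (real K ^ 2 + 2 * real n * real L) * ln (9 * real n * real L / \<epsilon>)"
    using ln_card_block_net_le[of K L \<delta> n] assms unfolding g_def by simp
  then show ?thesis
    using is_eps_net_block_net[of \<epsilon> n K L] assms unfolding \<delta>_def by auto
qed

end
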